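(* Let $R$ be an integral domain, $n$ a positive integer, and $I$ an ideal of $R$. Then $\langle I,X\rangle$ is a weakly $n$-absorbing ideal of the polynomial ring $R[X]$ if and only if $I$ is a weakly $n$-absorbing ideal of $R$.
   Context: All rings are commutative with $1\neq0$. A proper ideal $I$ of a ring $R$ is weakly $n$-absorbing if whenever $0\neq a_1\cdots a_{n+1}\in I$ with $a_1,\dots,a_{n+1}\in R$, there are $n$ of the $a_i$'s whose product is in $I$. $\langle I,X\rangle$ denotes the ideal of $R[X]$ generated by $I$ and $X$. *)

theory Defs
  imports "HOL-Computational_Algebra.Polynomial"
begin

definition is_ideal :: "'a::comm_ring_1 set \<Rightarrow> bool" where
  "is_ideal I \<longleftrightarrow> 0 \<in> I \<and> (\<forall>x\<in>I. \<forall>y\<in>I. x + y \<in> I) \<and> (\<forall>r x. x \<in> I \<longrightarrow> r * x \<in> I)"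

definition ideal_gen :: "'a::comm_ring_1 set \<Rightarrow> 'a set" where
  "ideal_gen S = \<Inter>{J. is_ideal J \<and> S \<subseteq> J}"

definition weakly_n_absorbing :: "nat \<Rightarrow> 'a::comm_ring_1 set \<Rightarrow> bool" where
  "weakly_n_absorbing n I \<longleftrightarrow> is_ideal I \<and> I \<noteq> UNIV \<and>
     (\<forall>a :: nat \<Rightarrow> 'a. (\<Prod>i\<le>n. a i) \<noteq> 0 \<longrightarrow> (\<Prod>i\<le>n. a i) \<in> I \<longrightarrow>
        (\<exists>j\<le>n. (\<Prod>i\<in>{..n} - {j}. a i) \<in> I))"

end

theory Submission
  imports Defs
begin

text \<open>The ideal \<open>\<langle>I, X\<rangle>\<close> is the preimage of \<open>I\<close> under \<open>p \<mapsto> p(0)\<close>, a surjective ring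
  homomorphism split by the constants. Constant factors transfer weak \<open>n\<close>-absorption from
  \<open>\<langle>I, X\<rangle>\<close> down to \<open>I\<close>. Conversely, if the constant terms of \<open>f\<^sub>0, \<dots>, f\<^sub>n\<close> have nonzero
  product, apply the hypothesis on \<open>I\<close> to them; otherwise, \<open>R\<close> being a domain, some \<open>f\<^sub>j(0) = 0\<close>,
  and since \<open>n > 0\<close> one may drop a factor other than \<open>f\<^sub>j\<close> and stay in \<open>\<langle>I, X\<rangle>\<close>.\<close>

lemma coeff_0_prod: "coeff (\<Prod>k\<in>A. p k) 0 = (\<Prod>k\<in>A. coeff (p k) 0)"
  by (simp only: poly_0_coeff_0[symmetric] poly_prod)

lemma is_ideal_coeff_0_preimage:
  fixes I :: "'a::comm_ring_1 set"
  assumes "is_ideal I"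
  shows "is_ideal {p. coeff p 0 \<in> I}"
  using assms unfolding is_ideal_def by (auto simp: coeff_mult_0)

lemma coeff_0_preimage_eq_UNIV_iff:
  "{p. coeff p 0 \<in> I} = UNIV \<longleftrightarrow> I = UNIV"
proof
  assume "{p. coeff p 0 \<in> I} = UNIV"
  then have "coeff [:c:] 0 \<in> I" for c by blast
  then show "I = UNIV" by auto
qed auto

lemma ideal_gen_const_X:
  fixes I :: "'a::comm_ring_1 set"
  assumes I: "is_ideal I"
  shows "ideal_gen ((\<lambda>c. [:c:]) ` I \<union> {[:0, 1:]}) = {p. coeff p 0 \<in> I}"
proof
  have "0 \<in> I" using I unfolding is_ideal_def by blast
  then have "(\<lambda>c. [:c:]) ` I \<union> {[:0, 1:]} \<subseteq> {p. coeff p 0 \<in> I}" by auto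
  then show "ideal_gen ((\<lambda>c. [:c:]) ` I \<union> {[:0, 1:]}) \<subseteq> {p. coeff p 0 \<in> I}"
    unfolding ideal_gen_def using is_ideal_coeff_0_preimage[OF I] by blast
next
  show "{p. coeff p 0 \<in> I} \<subseteq> ideal_gen ((\<lambda>c. [:c:]) ` I \<union> {[:0, 1:]})"
    unfolding ideal_gen_def
  proof (intro subsetI InterI)
    fix p J
    assume "p \<in> {p. coeff p 0 \<in> I}" and "J \<in> {J. is_ideal J \<and> (\<lambda>c. [:c:]) ` I \<union> {[:0, 1:]} \<subseteq> J}"
    then have p0: "coeff p 0 \<in> I" and J: "is_ideal J" "(\<lambda>c. [:c:]) ` I \<subseteq> J" "[:0, 1:] \<in> J"
      by auto
    obtain a q where p: "p = pCons a q" by (cases p)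
    have "[:a:] \<in> J" using J(2) p0 p by auto
    moreover have "q * [:0, 1:] \<in> J" using J(1,3) unfolding is_ideal_def by blast
    ultimately have "[:a:] + q * [:0, 1:] \<in> J" using J(1) unfolding is_ideal_def by blast
    then show "p \<in> J" using p by simp
  qed
qed

lemma weakly_n_absorbing_of_coeff_0_preimage:
  fixes I :: "'a::comm_ring_1 set"
  assumes I: "is_ideal I" and J: "weakly_n_absorbing n {p. coeff p 0 \<in> I}"
  shows "weakly_n_absorbing n I"
  unfolding weakly_n_absorbing_def
proof (intro conjI allI impI I)
  show "I \<noteq> UNIV"
    using J coeff_0_preimage_eq_UNIV_iff unfolding weakly_n_absorbing_def by blast
next
  fix a :: "nat \<Rightarrow> 'a"
  assume "(\<Prod>i\<le>n. a i) \<noteq> 0" and "(\<Prod>i\<le>n. a i) \<in> I"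
  then have "(\<Prod>i\<le>n. [:a i:]) \<noteq> 0" and "(\<Prod>i\<le>n. [:a i:]) \<in> {p. coeff p 0 \<in> I}"
    by (simp_all add: prod_to_poly)
  then obtain j where "j \<le> n" "(\<Prod>i\<in>{..n} - {j}. [:a i:]) \<in> {p. coeff p 0 \<in> I}"
    using J unfolding weakly_n_absorbing_def by blast
  then show "\<exists>j\<le>n. (\<Prod>i\<in>{..n} - {j}. a i) \<in> I"
    by (auto simp: prod_to_poly)
qed

lemma weakly_n_absorbing_coeff_0_preimage:
  fixes I :: "'a::idom set"
  assumes "n > 0" and I: "is_ideal I" and "weakly_n_absorbing n I"
  shows "weakly_n_absorbing n {p. coeff p 0 \<in> I}"
  unfolding weakly_n_absorbing_def
proof (intro conjI allI impI is_ideal_coeff_0_preimage[OF I])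
  show "{p. coeff p 0 \<in> I} \<noteq> UNIV"
    using assms(3) coeff_0_preimage_eq_UNIV_iff unfolding weakly_n_absorbing_def by blast
next
  fix f :: "nat \<Rightarrow> 'a poly"
  assume "(\<Prod>i\<le>n. f i) \<in> {p. coeff p 0 \<in> I}"
  then have f0: "(\<Prod>i\<le>n. coeff (f i) 0) \<in> I" by (simp add: coeff_0_prod)
  show "\<exists>j\<le>n. (\<Prod>i\<in>{..n} - {j}. f i) \<in> {p. coeff p 0 \<in> I}"
  proof (cases "(\<Prod>i\<le>n. coeff (f i) 0) = 0")
    case False
    then obtain j where "j \<le> n" "(\<Prod>i\<in>{..n} - {j}. coeff (f i) 0) \<in> I"
      using f0 assms(3) unfolding weakly_n_absorbing_def by blast
    then show ?thesis by (auto simp: coeff_0_prod)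
  next
    case True
    then obtain j where j: "j \<le> n" "coeff (f j) 0 = 0" by auto
    define k where "k = (if j = 0 then 1 else 0 :: nat)"
    have k: "k \<le> n" "k \<noteq> j" using \<open>n > 0\<close> by (auto simp: k_def)
    have "(\<Prod>i\<in>{..n} - {k}. coeff (f i) 0) = 0"
      using j k by (intro prod_zero) auto
    moreover have "0 \<in> I" using I unfolding is_ideal_def by blast
    ultimately have "(\<Prod>i\<in>{..n} - {k}. f i) \<in> {p. coeff p 0 \<in> I}"
      by (simp only: mem_Collect_eq coeff_0_prod)
    then show ?thesis using k(1) by blast
  qed
qed

theorem mainTheorem3:
  fixes I :: "'a::idom set" and n :: nat
  assumes "n > 0" and "is_ideal I"
  shows "weakly_n_absorbing n (ideal_gen ((\<lambda>c. [:c:]) ` I \<union> {[:0, 1:]}))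
         \<longleftrightarrow> weakly_n_absorbing n I"
  unfolding ideal_gen_const_X[OF assms(2)]
  using weakly_n_absorbing_of_coeff_0_preimage weakly_n_absorbing_coeff_0_preimage assms
  by blast

end
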